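(* Let $(G,+,\bullet)$ be an interchange near ring. Then $(G,\bullet)$ is associative if and only if for every $x\in G$ the following three identities hold: (i) $(x\bullet 0)\bullet 0 = x\bullet 0$; (ii) $(0\bullet x)\bullet 0 = 0\bullet (x\bullet 0)$; (iii) $0\bullet(0\bullet x) = 0\bullet x$.
   Context: An interchange near ring is a triple $(G,+,\bullet)$ where $(G,+)$ is a group (written additively, not necessarily abelian, with identity $0$ and inverses $-x$) and $\bullet$ is a binary operation on $G$ satisfying the interchange law $(w+x)\bullet(y+z) = (w\bullet y)+(x\bullet z)$ for all $w,x,y,z\in G$. No other axioms are imposed on $\bullet$. *)

theory Defs
  imports Main
begin

text \<open>An interchange near ring: a group (G,+) (here the type class group_add, not
necessarily abelian) with a binary operation m satisfying the interchange law.\<close>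
definition interchange_near_ring :: "('a::group_add \<Rightarrow> 'a \<Rightarrow> 'a) \<Rightarrow> bool" where
  "interchange_near_ring m \<longleftrightarrow>
     (\<forall>w x y z. m (w + x) (y + z) = m w y + m x z)"

end

theory Submission
  imports Defs
begin

(* Instantiating the interchange law with zeros shows that an
   interchange multiplication m is determined by its two "slices"
   f x = m x 0 and g y = m 0 y:  m x y = f x + g y, and both slices are additive
   (group endomorphisms), with m 0 0 = 0.
   If m is associative, the three identities are associativity instances in which
   one argument is 0 and m 0 0 = 0 is used.  Conversely, writing both sides of
   m (m x y) z = m x (m y z) through the slices gives
     f (f x) + f (g y) + g z      and      f x + g (f y) + g (g z),
   and the identities (i)-(iii) say exactly f o f = f, f o g = g o f, g o g = g,
   so the two sides agree. *)

context
  fixes m :: "'a::group_add \<Rightarrow> 'a \<Rightarrow> 'a"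
  assumes interchange: "interchange_near_ring m"
begin

lemma interchange_law: "m (w + x) (y + z) = m w y + m x z"
  using interchange unfolding interchange_near_ring_def by blast

(* Zero is a fixed point of m, since m 0 0 = m 0 0 + m 0 0 in a group. *)
lemma zero_mult_zero: "m 0 0 = 0"
proof -
  have "m 0 0 + m 0 0 = m 0 0 + 0"
    using interchange_law[of 0 0 0 0] by simp
  then show ?thesis by (rule add_left_imp_eq)
qed

lemma mult_split: "m x y = m x 0 + m 0 y"
  using interchange_law[of x 0 0 y] by simp

lemma left_slice_add: "m (a + b) 0 = m a 0 + m b 0"
  using interchange_law[of a b 0 0] by simp

lemma right_slice_add: "m 0 (a + b) = m 0 a + m 0 b"
  using interchange_law[of 0 0 a b] by simp

lemma mult_left_assoc_slices: "m (m x y) z = m (m x 0) 0 + m (m 0 y) 0 + m 0 z"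
proof -
  have "m (m x y) z = m (m x 0 + m 0 y) 0 + m 0 z"
    using mult_split[of "m x y" z] mult_split[of x y] by simp
  then show ?thesis by (simp add: left_slice_add)
qed

lemma mult_right_assoc_slices: "m x (m y z) = m x 0 + (m 0 (m y 0) + m 0 (m 0 z))"
proof -
  have "m x (m y z) = m x 0 + m 0 (m y 0 + m 0 z)"
    using mult_split[of x "m y z"] mult_split[of y z] by simp
  then show ?thesis by (simp add: right_slice_add)
qed

end

theorem lemma2p2:
  fixes m :: "'a::group_add \<Rightarrow> 'a \<Rightarrow> 'a"
  assumes "interchange_near_ring m"
  shows "(\<forall>x y z. m (m x y) z = m x (m y z)) \<longleftrightarrow>
         (\<forall>x. m (m x 0) 0 = m x 0 \<and> m (m 0 x) 0 = m 0 (m x 0) \<and> m 0 (m 0 x) = m 0 x)"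
proof
  assume assoc: "\<forall>x y z. m (m x y) z = m x (m y z)"
  show "\<forall>x. m (m x 0) 0 = m x 0 \<and> m (m 0 x) 0 = m 0 (m x 0) \<and> m 0 (m 0 x) = m 0 x"
  proof (intro allI conjI)
    fix x
    have "m (m x 0) 0 = m x (m 0 0)"
      using assoc by blast
    then show "m (m x 0) 0 = m x 0"
      by (simp only: zero_mult_zero[OF assms])
    show "m (m 0 x) 0 = m 0 (m x 0)"
      using assoc by blast
    have "m 0 (m 0 x) = m (m 0 0) x"
      using assoc by simp
    then show "m 0 (m 0 x) = m 0 x"
      by (simp only: zero_mult_zero[OF assms])
  qed
next
  assume slices: "\<forall>x. m (m x 0) 0 = m x 0 \<and> m (m 0 x) 0 = m 0 (m x 0) \<and> m 0 (m 0 x) = m 0 x"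
  show "\<forall>x y z. m (m x y) z = m x (m y z)"
  proof (intro allI)
    fix x y z
    have "m (m x y) z = m (m x 0) 0 + m (m 0 y) 0 + m 0 z"
      by (rule mult_left_assoc_slices[OF assms])
    also have "\<dots> = m x 0 + m 0 (m y 0) + m 0 (m 0 z)"
    proof -
      have left: "m (m x 0) 0 = m x 0" and mixed: "m (m 0 y) 0 = m 0 (m y 0)"
        and right: "m 0 (m 0 z) = m 0 z"
        using slices by blast+
      show ?thesis
        by (simp only: left mixed right)
    qed
    also have "\<dots> = m x (m y z)"
      by (simp only: mult_right_assoc_slices[OF assms, of x y z] add.assoc)
    finally show "m (m x y) z = m x (m y z)" .
  qed
qed

end
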